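(* Let $P=\mathbb{Q}[x_1,\dots,x_n]$, let $\sigma$ and $\tau$ be two term orderings on $\mathbb{T}^n$, and let $I$ be a non-zero ideal in $P$. Let $p$ and $q$ be primes which are $\sigma$-good for $I$. If $O_\tau(I_{(q,\sigma)})\prec_\tau O_\tau(I_{(p,\sigma)})$, then $q$ is $\tau$-bad for $I$.
   Context: $\mathbb{T}^n$ is the monoid of power-products in $x_1,\dots,x_n$. For $f\in P$, $\operatorname{den}(f)$ is the positive lcm of the denominators of its coefficients; $\operatorname{den}(G)$ is the lcm of $\operatorname{den}(g)$, $g\in G$. For a term ordering $\rho$ with $G_\rho$ the reduced $\rho$-Gröbner basis of $I$, a prime $p$ is $\rho$-good for $I$ if $p\nmid\operatorname{den}(G_\rho)$ and $\rho$-bad otherwise. For $\sigma$-good $p$, $\pi_p$ is coefficientwise reduction modulo $p$ into $\mathbb{F}_p[x_1,\dots,x_n]$ and $I_{(p,\sigma)}$ is the ideal of $\mathbb{F}_p[x_1,\dots,x_n]$ generated by $\pi_p(G_\sigma)$. A tuple $(t_1,\dots,t_r)$ of distinct power-products is $\tau$-ordered if $t_1<_\tau\cdots<_\tau t_r$. For an ideal $J$ in a polynomial ring over a field, $O_\tau(J)$ is the $\tau$-ordered tuple of the leading terms of a minimal $\tau$-Gröbner basis of $J$. For $\tau$-ordered tuples $T=(t_1,\dots,t_r)$ and $T'=(t'_1,\dots,t'_{r'})$, $T'\prec_\tau T$ means either $T$ is a proper prefix of $T'$ (i.e. $r<r'$ and $t_i=t'_i$ for $i\le r$), or there is $k\le\min(r,r')$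 with $t_i=t'_i$ for $i<k$ and $t'_k<_\tau t_k$. *)

theory Defs
  imports "HOL-Library.Poly_Mapping" "Berlekamp_Zassenhaus.Finite_Field"
begin

(* Power-products in the variables of a finite type 'v are finitely supported
  exponent vectors (written additively); polynomials with coefficients in 'k
  are finitely supported coefficient maps on power-products
  (multiplication = convolution from Poly_Mapping). *)

type_synonym 'v pp = "'v \<Rightarrow>\<^sub>0 nat"
type_synonym ('v, 'k) mpoly = "'v pp \<Rightarrow>\<^sub>0 'k"

definition term_order :: "('v pp \<Rightarrow> 'v pp \<Rightarrow> bool) \<Rightarrow> bool" where
  "term_order ord \<longleftrightarrow>
     (\<forall>s. ord s s) \<and>
     (\<forall>s t. ord s t \<and> ord t s \<longrightarrow> s = t) \<and>
     (\<forall>s t u. ord s t \<and> ord t u \<longrightarrow> ord s u) \<and>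
     (\<forall>s t. ord s t \<or> ord t s) \<and>
     (\<forall>t. ord 0 t) \<and>
     (\<forall>s t u. ord s t \<longrightarrow> ord (s + u) (t + u))"

definition strict_of :: "('v pp \<Rightarrow> 'v pp \<Rightarrow> bool) \<Rightarrow> 'v pp \<Rightarrow> 'v pp \<Rightarrow> bool" where
  "strict_of ord s t \<longleftrightarrow> ord s t \<and> s \<noteq> t"

definition pp_dvd :: "'v pp \<Rightarrow> 'v pp \<Rightarrow> bool" where
  "pp_dvd s t \<longleftrightarrow> (\<forall>v. Poly_Mapping.lookup s v \<le> Poly_Mapping.lookup t v)"

text \<open>Leading term and leading coefficient (for non-zero f).\<close>
definition lterm :: "('v pp \<Rightarrow> 'v pp \<Rightarrow> bool) \<Rightarrow> ('v, 'k::zero) mpoly \<Rightarrow> 'v pp" where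
  "lterm ord f = (THE t. t \<in> Poly_Mapping.keys f \<and> (\<forall>s\<in>Poly_Mapping.keys f. ord s t))"

definition lcoeff :: "('v pp \<Rightarrow> 'v pp \<Rightarrow> bool) \<Rightarrow> ('v, 'k::zero) mpoly \<Rightarrow> 'k" where
  "lcoeff ord f = Poly_Mapping.lookup f (lterm ord f)"

definition is_ideal :: "'a::comm_ring_1 set \<Rightarrow> bool" where
  "is_ideal J \<longleftrightarrow> 0 \<in> J \<and> (\<forall>f\<in>J. \<forall>g\<in>J. f + g \<in> J) \<and> (\<forall>f\<in>J. \<forall>h. h * f \<in> J)"

definition ideal_gen :: "'a::comm_ring_1 set \<Rightarrow> 'a set" where
  "ideal_gen G = \<Inter>{J. is_ideal J \<and> G \<subseteq> J}"

definition is_GB :: "('v pp \<Rightarrow> 'v pp \<Rightarrow> bool) \<Rightarrow> ('v, 'k::field) mpoly set \<Rightarrow> ('v, 'k) mpoly set \<Rightarrow> bool" where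
  "is_GB ord J G \<longleftrightarrow> finite G \<and> G \<subseteq> J \<and> 0 \<notin> G \<and>
     (\<forall>f\<in>J. f \<noteq> 0 \<longrightarrow> (\<exists>g\<in>G. pp_dvd (lterm ord g) (lterm ord f)))"

definition is_minimal_GB :: "('v pp \<Rightarrow> 'v pp \<Rightarrow> bool) \<Rightarrow> ('v, 'k::field) mpoly set \<Rightarrow> ('v, 'k) mpoly set \<Rightarrow> bool" where
  "is_minimal_GB ord J G \<longleftrightarrow> is_GB ord J G \<and>
     (\<forall>g\<in>G. lcoeff ord g = 1) \<and>
     (\<forall>g\<in>G. \<forall>g'\<in>G. g \<noteq> g' \<longrightarrow> \<not> pp_dvd (lterm ord g) (lterm ord g'))"

definition is_reduced_GB :: "('v pp \<Rightarrow> 'v pp \<Rightarrow> bool) \<Rightarrow> ('v, 'k::field) mpoly set \<Rightarrow> ('v, 'k) mpoly set \<Rightarrow> bool" where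
  "is_reduced_GB ord J G \<longleftrightarrow> is_GB ord J G \<and>
     (\<forall>g\<in>G. lcoeff ord g = 1) \<and>
     (\<forall>g\<in>G. \<forall>g'\<in>G. g \<noteq> g' \<longrightarrow> (\<forall>t\<in>Poly_Mapping.keys g'. \<not> pp_dvd (lterm ord g) t))"

text \<open>The (unique) reduced Groebner basis G_rho of J.\<close>
definition reduced_GB :: "('v pp \<Rightarrow> 'v pp \<Rightarrow> bool) \<Rightarrow> ('v, 'k::field) mpoly set \<Rightarrow> ('v, 'k) mpoly set" where
  "reduced_GB ord J = (THE G. is_reduced_GB ord J G)"

definition den_poly :: "('v, rat) mpoly \<Rightarrow> int" where
  "den_poly f = Lcm ((\<lambda>c. snd (quotient_of c)) ` Poly_Mapping.lookup f ` Poly_Mapping.keys f)"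

definition den_set :: "('v, rat) mpoly set \<Rightarrow> int" where
  "den_set G = Lcm (den_poly ` G)"

definition good :: "('v pp \<Rightarrow> 'v pp \<Rightarrow> bool) \<Rightarrow> ('v, rat) mpoly set \<Rightarrow> nat \<Rightarrow> bool" where
  "good ord I p \<longleftrightarrow> \<not> int p dvd den_set (reduced_GB ord I)"

text \<open>Reduction modulo p of a rational (with p not dividing the denominator)
  into F_p, represented as 'p mod_ring with CARD('p) = p.\<close>
definition rat_mod :: "rat \<Rightarrow> 'p::prime_card mod_ring" where
  "rat_mod r = (case quotient_of r of (a, b) \<Rightarrow> of_int a / of_int b)"

definition pi_mod :: "('v, rat) mpoly \<Rightarrow> ('v, 'p::prime_card mod_ring) mpoly" where
  "pi_mod f = Poly_Mapping.map rat_mod f"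

text \<open>I_(p,sigma): the ideal of F_p[x] generated by pi_p(G_sigma).\<close>
definition red_ideal :: "('v pp \<Rightarrow> 'v pp \<Rightarrow> bool) \<Rightarrow> ('v, rat) mpoly set \<Rightarrow> ('v, 'p::prime_card mod_ring) mpoly set" where
  "red_ideal ord I = ideal_gen (pi_mod ` reduced_GB ord I)"

text \<open>O_tau(J): tau-ordered tuple of leading terms of a minimal tau-Groebner basis.\<close>
definition O_tuple :: "('v pp \<Rightarrow> 'v pp \<Rightarrow> bool) \<Rightarrow> ('v, 'k::field) mpoly set \<Rightarrow> 'v pp list" where
  "O_tuple ord J = (SOME T. \<exists>G. is_minimal_GB ord J G \<and>
       sorted_wrt (strict_of ord) T \<and> set T = lterm ord ` G)"

text \<open>tuple_prec ord T' T  means  T' \<prec>_tau T.\<close>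
definition tuple_prec :: "('v pp \<Rightarrow> 'v pp \<Rightarrow> bool) \<Rightarrow> 'v pp list \<Rightarrow> 'v pp list \<Rightarrow> bool" where
  "tuple_prec ord T' T \<longleftrightarrow>
     (length T < length T' \<and> take (length T) T' = T) \<or>
     (\<exists>k < min (length T) (length T'). take k T = take k T' \<and> strict_of ord (T' ! k) (T ! k))"

end

theory Submission
  imports Defs
begin

(* Write pi for reduction of coefficients modulo a prime and G_rho for the reduced rho-Groebner
  basis of I. If q is sigma-good, dividing a q-integral element of I by the monic q-integral basis
  G_sigma commutes with pi, so I_(q,sigma) is the image under pi of the q-integral part of I. If q
  is also tau-good, the same division argument with G_tau shows that pi(G_tau) is a minimal
  tau-Groebner basis of I_(q,sigma) with the leading terms of G_tau; hence
  O_tau(I_(q,sigma)) = O_tau(I).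

  For an arbitrary sigma-good p, every g in G_tau, scaled by a power of p until it is p-integral
  but non-zero modulo p, reduces to a non-zero element of I_(p,sigma) supported in supp g. Its
  leading term lies tau-below LT(g) and, G_tau being reduced, is divisible by no other leading
  term of G_tau. Comparing sorted tuples entry by entry, this rules out
  O_tau(I) \<prec> O_tau(I_(p,sigma)), so O_tau(I_(q,sigma)) \<prec> O_tau(I_(p,sigma)) forces q
  to be tau-bad. *)

section \<open>Term orders\<close>

lemma pp_dvd_refl [simp]: "pp_dvd s s"
  by (simp add: pp_dvd_def)

lemma pp_dvd_trans: "pp_dvd s t \<Longrightarrow> pp_dvd t u \<Longrightarrow> pp_dvd s u"
  unfolding pp_dvd_def using le_trans by blast

lemma pp_dvd_antisym: "pp_dvd s t \<Longrightarrow> pp_dvd t s \<Longrightarrow> s = t"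
  unfolding pp_dvd_def by (intro poly_mapping_eqI) (simp add: le_antisym)

lemma pp_dvd_add [simp]: "pp_dvd s (s + u)"
  by (simp add: pp_dvd_def lookup_add)

lemma pp_dvd_add_diff: "pp_dvd s t \<Longrightarrow> s + (t - s) = t"
  unfolding pp_dvd_def by (intro poly_mapping_eqI) (simp add: lookup_add lookup_minus)

lemma pp_dvd_iff_add: "pp_dvd s t \<longleftrightarrow> (\<exists>u. t = s + u)"
  by (metis pp_dvd_add pp_dvd_add_diff)

lemma term_order_linorder: "term_order ord \<Longrightarrow> class.linorder ord (strict_of ord)"
  unfolding term_order_def strict_of_def by unfold_locales blast+

locale term_ordering =
  fixes ord :: "'v pp \<Rightarrow> 'v pp \<Rightarrow> bool"
  assumes term_order: "term_order ord"
begin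

sublocale tord: linorder ord "strict_of ord"
  by (rule term_order_linorder[OF term_order])

lemma zero_least: "ord 0 t"
  using term_order unfolding term_order_def by blast

lemma ord_add_left_mono: "ord s t \<Longrightarrow> ord (u + s) (u + t)"
  using term_order unfolding term_order_def by (metis add.commute)

lemma strict_add_left_mono: "strict_of ord s t \<Longrightarrow> strict_of ord (u + s) (u + t)"
  by (simp add: strict_of_def ord_add_left_mono)

lemma pp_dvd_imp_le: "pp_dvd s t \<Longrightarrow> ord s t"
  unfolding pp_dvd_iff_add using ord_add_left_mono[OF zero_least] by force

lemma exists_strict_upper_bound:
  assumes "finite A"
  shows "\<exists>t. \<forall>s\<in>A. strict_of ord s t"
proof -
  define m where "m = (if A = {} then 0 else tord.Max A)"
  define e :: "'v pp" where "e = Poly_Mapping.single undefined 1"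
  have "e \<noteq> 0"
    unfolding e_def by (metis lookup_single_eq lookup_zero one_neq_zero)
  then have "strict_of ord 0 e"
    using zero_least by (simp add: strict_of_def)
  then have "strict_of ord m (m + e)"
    using strict_add_left_mono[of 0 e m] by simp
  moreover have "ord s m" if "s \<in> A" for s
    using that assms by (auto simp: m_def)
  ultimately show ?thesis
    using tord.le_less_trans by blast
qed

end

section \<open>Dickson's lemma\<close>

lemma nat_seq_mono_subseq:
  fixes s :: "nat \<Rightarrow> nat"
  obtains f :: "nat \<Rightarrow> nat" where "strict_mono f" "mono (s \<circ> f)"
proof -
  obtain f where f: "strict_mono f" "monoseq (s \<circ> f)"
    using seq_monosub[of s] by (auto simp: o_def)
  show ?thesis
  proof (cases "mono (s \<circ> f)")
    case True
    with f(1) that show ?thesis by blast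
  next
    case False
    then have anti: "m \<le> n \<Longrightarrow> s (f n) \<le> s (f m)" for m n
      using f(2) unfolding monoseq_def mono_def by auto
    obtain N where N: "\<And>n. s (f N) \<le> s (f n)"
      using ex_has_least_nat[of "\<lambda>_. True" 0 "s \<circ> f"] by auto
    have "s (f (N + n)) = s (f N)" for n
      using N anti[of N "N + n"] by (simp add: le_antisym)
    then have "mono (s \<circ> (\<lambda>n. f (N + n)))"
      by (simp add: mono_def)
    moreover have "strict_mono (\<lambda>n. f (N + n))"
      using f(1) by (simp add: strict_mono_def)
    ultimately show ?thesis
      using that by blast
  qed
qed

lemma pp_seq_mono_subseq:
  fixes s :: "nat \<Rightarrow> 'v pp"
  assumes "finite V"
  shows "\<exists>f :: nat \<Rightarrow> nat. strict_mono f \<and> (\<forall>v\<in>V. mono (\<lambda>n. Poly_Mapping.lookup (s (f n)) v))"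
  using assms
proof (induction V rule: finite_induct)
  case empty
  have "strict_mono (\<lambda>n::nat. n)"
    by (simp add: strict_mono_def)
  then show ?case
    by blast
next
  case (insert v V)
  then obtain f :: "nat \<Rightarrow> nat"
    where f: "strict_mono f" "\<forall>w\<in>V. mono (\<lambda>n. Poly_Mapping.lookup (s (f n)) w)"
    by blast
  obtain g :: "nat \<Rightarrow> nat" where g: "strict_mono g" "mono ((\<lambda>n. Poly_Mapping.lookup (s (f n)) v) \<circ> g)"
    by (rule nat_seq_mono_subseq)
  have "mono (\<lambda>n. Poly_Mapping.lookup (s (f (g n))) w)" if "w \<in> V" for w
    using that f(2) strict_mono_mono[OF g(1)] unfolding mono_def by blast
  with g(2) have "\<forall>w\<in>insert v V. mono (\<lambda>n. Poly_Mapping.lookup (s ((f \<circ> g) n)) w)"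
    by (simp add: o_def)
  moreover have "strict_mono (f \<circ> g)"
    using f(1) g(1) by (simp add: strict_mono_def)
  ultimately show ?case
    by blast
qed

lemma dickson:
  fixes s :: "nat \<Rightarrow> 'v::finite pp"
  obtains i j where "i < j" "pp_dvd (s i) (s j)"
proof -
  obtain f :: "nat \<Rightarrow> nat" where "strict_mono f" "\<forall>v. mono (\<lambda>n. Poly_Mapping.lookup (s (f n)) v)"
    using pp_seq_mono_subseq[of UNIV s] by auto
  then have "f 0 < f 1" "pp_dvd (s (f 0)) (s (f 1))"
    by (auto simp: pp_dvd_def mono_def strict_mono_def)
  then show ?thesis
    by (rule that)
qed

lemma finite_pp_antichain:
  fixes A :: "'v::finite pp set"
  assumes "\<And>s t. s \<in> A \<Longrightarrow> t \<in> A \<Longrightarrow> pp_dvd s t \<Longrightarrow> s = t"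
  shows "finite A"
proof (rule ccontr)
  assume "infinite A"
  then obtain f :: "nat \<Rightarrow> _" where f: "inj f" "range f \<subseteq> A"
    using infinite_countable_subset by blast
  obtain i j where "i < j" "pp_dvd (f i) (f j)"
    using dickson by blast
  with f assms[of "f i" "f j"] show False
    by (auto dest: injD)
qed

locale finite_term_ordering = term_ordering ord for ord :: "'v::finite pp \<Rightarrow> 'v pp \<Rightarrow> bool"
begin

lemma wf_strict: "wf {(s, t). strict_of ord s t}"
  unfolding wf_iff_no_infinite_down_chain
proof (rule notI, elim exE)
  fix f assume "\<forall>i. (f (Suc i), f i) \<in> {(s, t). strict_of ord s t}"
  then have desc: "strict_of ord (f (Suc i)) (f i)" for i
    by simp
  obtain i j where "i < j" "pp_dvd (f i) (f j)"
    using dickson by blast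
  then have "ord (f i) (f j)" "ord (f j) (f (Suc i))"
    using pp_dvd_imp_le tord.lift_Suc_antimono_le[of f] desc tord.less_imp_le by auto
  then have "ord (f i) (f (Suc i))"
    by (rule tord.order.trans)
  then show False
    using desc[of i] by (simp add: tord.not_le[symmetric])
qed

sublocale tord: wellorder ord "strict_of ord"
proof
  show "P a" if "\<And>x. (\<And>y. strict_of ord y x \<Longrightarrow> P y) \<Longrightarrow> P x" for P a
    using wf_induct_rule[OF wf_strict, of P a] that by auto
qed

end

section \<open>Leading terms\<close>

lemma lookup_single_mult:
  fixes g :: "('v, 'k::semiring_0) mpoly"
  shows "Poly_Mapping.lookup (Poly_Mapping.single u c * g) t =
    (if pp_dvd u t then c * Poly_Mapping.lookup g (t - u) else 0)"
proof -
  have eq: "t = u + q \<longleftrightarrow> pp_dvd u t \<and> q = t - u" for q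
    by (metis pp_dvd_add pp_dvd_add_diff add_diff_cancel_left')
  have "Poly_Mapping.lookup (Poly_Mapping.single u c * g) t =
      c * Sum_any (\<lambda>q. Poly_Mapping.lookup g q when t = u + q)"
    by (simp add: lookup_mult lookup_single when_mult)
  then show ?thesis
    unfolding eq by (simp add: when_def)
qed

lemma lookup_single_mult_add [simp]:
  fixes g :: "('v, 'k::semiring_0) mpoly"
  shows "Poly_Mapping.lookup (Poly_Mapping.single u c * g) (u + t) = c * Poly_Mapping.lookup g t"
  by (simp add: lookup_single_mult)

lemma lookup_single_zero_mult [simp]:
  fixes g :: "('v, 'k::semiring_0) mpoly"
  shows "Poly_Mapping.lookup (Poly_Mapping.single 0 c * g) t = c * Poly_Mapping.lookup g t"
  using lookup_single_mult_add[of 0 c g t] by simp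

lemma keys_single_mult_subset:
  fixes g :: "('v, 'k::semiring_0) mpoly"
  shows "Poly_Mapping.keys (Poly_Mapping.single u c * g) \<subseteq> (+) u ` Poly_Mapping.keys g"
proof
  fix t assume "t \<in> Poly_Mapping.keys (Poly_Mapping.single u c * g)"
  then have "pp_dvd u t" "t - u \<in> Poly_Mapping.keys g"
    by (auto simp: in_keys_iff lookup_single_mult split: if_splits)
  then show "t \<in> (+) u ` Poly_Mapping.keys g"
    by (metis image_eqI pp_dvd_add_diff)
qed

lemma keys_single_mult:
  fixes g :: "('v, 'k::idom) mpoly"
  assumes "c \<noteq> 0"
  shows "Poly_Mapping.keys (Poly_Mapping.single u c * g) = (+) u ` Poly_Mapping.keys g"
proof
  show "(+) u ` Poly_Mapping.keys g \<subseteq> Poly_Mapping.keys (Poly_Mapping.single u c * g)"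
    using assms by (auto simp: in_keys_iff)
qed (rule keys_single_mult_subset)

lemma in_keys_diff:
  "s \<in> Poly_Mapping.keys (f - g) \<Longrightarrow> s \<in> Poly_Mapping.keys f \<or> s \<in> Poly_Mapping.keys (g :: 'a \<Rightarrow>\<^sub>0 'b::ab_group_add)"
  by (auto simp: in_keys_iff lookup_minus)

lemma single_mult_nonzero:
  fixes g :: "('v, 'k::idom) mpoly"
  shows "c \<noteq> 0 \<Longrightarrow> g \<noteq> 0 \<Longrightarrow> Poly_Mapping.single u c * g \<noteq> 0"
  using keys_single_mult[of c u g] by auto

context term_ordering
begin

lemma lterm_eqI:
  assumes "t \<in> Poly_Mapping.keys f" "\<And>s. s \<in> Poly_Mapping.keys f \<Longrightarrow> ord s t"
  shows "lterm ord f = t"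
  unfolding lterm_def using assms by (blast intro: tord.order.antisym)

lemma lterm_eq_Max: "f \<noteq> 0 \<Longrightarrow> lterm ord f = tord.Max (Poly_Mapping.keys f)"
  by (rule lterm_eqI) simp_all

lemma lterm_in_keys: "f \<noteq> 0 \<Longrightarrow> lterm ord f \<in> Poly_Mapping.keys f"
  by (simp add: lterm_eq_Max)

lemma le_lterm: "s \<in> Poly_Mapping.keys f \<Longrightarrow> ord s (lterm ord f)"
  by (metis empty_iff finite_keys keys_zero lterm_eq_Max tord.Max_ge)

lemma lcoeff_nonzero: "f \<noteq> 0 \<Longrightarrow> lcoeff ord f \<noteq> 0"
  using lterm_in_keys by (simp add: lcoeff_def in_keys_iff)

lemma lterm_single_mult:
  fixes g :: "('v, 'k::idom) mpoly"
  assumes "c \<noteq> 0" "g \<noteq> 0"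
  shows "lterm ord (Poly_Mapping.single u c * g) = u + lterm ord g"
  using assms by (intro lterm_eqI) (auto simp: keys_single_mult lterm_in_keys le_lterm ord_add_left_mono)

lemma lcoeff_single_mult:
  fixes g :: "('v, 'k::idom) mpoly"
  assumes "c \<noteq> 0" "g \<noteq> 0"
  shows "lcoeff ord (Poly_Mapping.single u c * g) = c * lcoeff ord g"
  using assms by (simp add: lcoeff_def lterm_single_mult)

lemma cancel_lterm:
  fixes f g :: "('v, 'k::comm_ring_1) mpoly"
  assumes "lcoeff ord g = 1" "t = u + lterm ord g"
  defines "f' \<equiv> f - Poly_Mapping.single u (Poly_Mapping.lookup f t) * g"
  shows "Poly_Mapping.lookup f' t = 0"
    and "s \<in> Poly_Mapping.keys f' \<Longrightarrow> s \<in> Poly_Mapping.keys f \<or> ord s t"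
proof -
  show "Poly_Mapping.lookup f' t = 0"
    using assms by (simp add: f'_def lookup_minus lcoeff_def)
  assume "s \<in> Poly_Mapping.keys f'"
  then consider "s \<in> Poly_Mapping.keys f" | "s \<in> Poly_Mapping.keys (Poly_Mapping.single u (Poly_Mapping.lookup f t) * g)"
    unfolding f'_def by (blast dest: in_keys_diff)
  then show "s \<in> Poly_Mapping.keys f \<or> ord s t"
  proof cases
    case 2
    then obtain s' where s': "s' \<in> Poly_Mapping.keys g" "s = u + s'"
      using keys_single_mult_subset by blast
    then show ?thesis
      using assms(2) ord_add_left_mono[OF le_lterm[OF s'(1)]] by simp
  qed simp
qed

end

section \<open>Ideals and their leading terms\<close>

lemma ideal_zero: "is_ideal J \<Longrightarrow> 0 \<in> J"
  by (simp add: is_ideal_def)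

lemma ideal_add: "is_ideal J \<Longrightarrow> f \<in> J \<Longrightarrow> g \<in> J \<Longrightarrow> f + g \<in> J"
  by (simp add: is_ideal_def)

lemma ideal_mult: "is_ideal J \<Longrightarrow> f \<in> J \<Longrightarrow> h * f \<in> J"
  by (simp add: is_ideal_def)

lemma ideal_diff: "is_ideal J \<Longrightarrow> f \<in> J \<Longrightarrow> g \<in> J \<Longrightarrow> f - g \<in> J"
  using ideal_add[of J f "- 1 * g"] ideal_mult[of J g "- 1"] by simp

lemma is_ideal_ideal_gen: "is_ideal (ideal_gen G)"
  unfolding ideal_gen_def is_ideal_def by blast

lemma ideal_gen_subset: "G \<subseteq> ideal_gen G"
  unfolding ideal_gen_def by blast

lemma ideal_gen_least: "is_ideal J \<Longrightarrow> G \<subseteq> J \<Longrightarrow> ideal_gen G \<subseteq> J"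
  unfolding ideal_gen_def by blast

definition lterms :: "('v pp \<Rightarrow> 'v pp \<Rightarrow> bool) \<Rightarrow> ('v, 'k::zero) mpoly set \<Rightarrow> 'v pp set" where
  "lterms ord J = lterm ord ` (J - {0})"

definition min_lterms :: "('v pp \<Rightarrow> 'v pp \<Rightarrow> bool) \<Rightarrow> ('v, 'k::zero) mpoly set \<Rightarrow> 'v pp set" where
  "min_lterms ord J = {s \<in> lterms ord J. \<forall>s'\<in>lterms ord J. pp_dvd s' s \<longrightarrow> s' = s}"

lemma lterm_image_minimal_GB:
  assumes "is_minimal_GB ord J G"
  shows "lterm ord ` G = min_lterms ord J"
proof -
  have G: "G \<subseteq> J" "0 \<notin> G" "\<And>f. f \<in> J \<Longrightarrow> f \<noteq> 0 \<Longrightarrow> \<exists>g\<in>G. pp_dvd (lterm ord g) (lterm ord f)"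
    and antichain: "\<And>g g'. g \<in> G \<Longrightarrow> g' \<in> G \<Longrightarrow> pp_dvd (lterm ord g) (lterm ord g') \<Longrightarrow> g = g'"
    using assms unfolding is_minimal_GB_def is_GB_def by blast+
  have lterms_G: "lterm ord ` G \<subseteq> lterms ord J"
    using G(1,2) unfolding lterms_def by blast
  have dvd_lterms: "\<exists>g\<in>G. pp_dvd (lterm ord g) s" if "s \<in> lterms ord J" for s
    using that G(3) unfolding lterms_def by blast
  show ?thesis
  proof (intro equalityI subsetI)
    fix t assume "t \<in> lterm ord ` G"
    then obtain g where g: "g \<in> G" "t = lterm ord g"
      by blast
    have "s = t" if "s \<in> lterms ord J" "pp_dvd s t" for s
      using dvd_lterms[OF that(1)] that(2) g antichain pp_dvd_trans pp_dvd_antisym by metis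
    with \<open>t \<in> lterm ord ` G\<close> lterms_G show "t \<in> min_lterms ord J"
      unfolding min_lterms_def by blast
  next
    fix s assume "s \<in> min_lterms ord J"
    then show "s \<in> lterm ord ` G"
      using dvd_lterms lterms_G unfolding min_lterms_def by blast
  qed
qed

context term_ordering
begin

lemma reduced_GB_is_minimal:
  assumes "is_reduced_GB ord J G"
  shows "is_minimal_GB ord J G"
proof -
  have "0 \<notin> G"
    using assms by (simp add: is_reduced_GB_def is_GB_def)
  then have "lterm ord g' \<in> Poly_Mapping.keys g'" if "g' \<in> G" for g'
    using that lterm_in_keys by metis
  then have "\<not> pp_dvd (lterm ord g) (lterm ord g')" if "g \<in> G" "g' \<in> G" "g \<noteq> g'" for g g'
    using assms that unfolding is_reduced_GB_def by blast
  with assms show ?thesis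
    unfolding is_reduced_GB_def is_minimal_GB_def by blast
qed

lemma monic_with_lterm:
  fixes J :: "('v, 'k::field) mpoly set"
  assumes "is_ideal J" "s \<in> lterms ord J"
  obtains g where "g \<in> J" "g \<noteq> 0" "lterm ord g = s" "lcoeff ord g = 1"
proof -
  obtain f where f: "f \<in> J" "f \<noteq> 0" "lterm ord f = s"
    using assms(2) unfolding lterms_def by blast
  define c where "c = inverse (lcoeff ord f)"
  have "c \<noteq> 0" "c * lcoeff ord f = 1"
    using lcoeff_nonzero[OF f(2)] by (simp_all add: c_def)
  then show ?thesis
    using that[of "Poly_Mapping.single 0 c * f"] ideal_mult[OF assms(1) f(1)] f
    by (simp add: single_mult_nonzero lterm_single_mult lcoeff_single_mult)
qed

lemma lterms_dvd_closed:
  fixes J :: "('v, 'k::idom) mpoly set"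
  assumes "is_ideal J" "s \<in> lterms ord J" "pp_dvd s t"
  shows "t \<in> lterms ord J"
proof -
  obtain f where f: "f \<in> J" "f \<noteq> 0" "lterm ord f = s"
    using assms(2) unfolding lterms_def by blast
  let ?h = "Poly_Mapping.single (t - s) 1 * f"
  have "?h \<in> J - {0}"
    using ideal_mult[OF assms(1) f(1)] single_mult_nonzero[OF _ f(2)] by simp
  moreover have "lterm ord ?h = t"
    using f assms(3) by (simp add: lterm_single_mult add.commute pp_dvd_add_diff)
  ultimately show ?thesis
    unfolding lterms_def by (metis image_eqI)
qed

end

context finite_term_ordering
begin

lemma finite_min_lterms: "finite (min_lterms ord J)"
  by (rule finite_pp_antichain) (auto simp: min_lterms_def)

lemma min_lterms_dvd:
  assumes "s \<in> lterms ord J"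
  obtains m where "m \<in> min_lterms ord J" "pp_dvd m s"
  using assms
proof (induction s arbitrary: thesis rule: tord.less_induct)
  case (less s)
  show ?case
  proof (cases "s \<in> min_lterms ord J")
    case True
    then show ?thesis
      using less.prems(1) by simp
  next
    case False
    then obtain s' where s': "s' \<in> lterms ord J" "pp_dvd s' s" "s' \<noteq> s"
      using less.prems(2) unfolding min_lterms_def by blast
    then have "strict_of ord s' s"
      by (simp add: strict_of_def pp_dvd_imp_le)
    then show ?thesis
      using less.IH s'(1,2) less.prems(1) pp_dvd_trans by metis
  qed
qed

end

section \<open>Normal forms and reduced Groebner bases\<close>

definition is_normal_form ::
    "('v pp \<Rightarrow> 'v pp \<Rightarrow> bool) \<Rightarrow> ('v, 'k::comm_ring_1) mpoly set \<Rightarrow> ('v, 'k) mpoly \<Rightarrow> ('v, 'k) mpoly \<Rightarrow> bool" where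
  "is_normal_form ord J f r \<longleftrightarrow> f - r \<in> J \<and>
     (\<forall>u\<in>Poly_Mapping.keys r. u \<notin> lterms ord J \<and> (\<exists>w\<in>Poly_Mapping.keys f. ord u w))"

context term_ordering
begin

lemma reduction_step:
  fixes J :: "('v, 'k::field) mpoly set"
  assumes "is_ideal J" "t \<in> Poly_Mapping.keys f" "t \<in> lterms ord J"
    and "\<And>u. u \<in> Poly_Mapping.keys f \<Longrightarrow> u \<in> lterms ord J \<Longrightarrow> ord u t"
  obtains f' where "f - f' \<in> J"
    "\<And>u. u \<in> Poly_Mapping.keys f' \<Longrightarrow> u \<in> lterms ord J \<Longrightarrow> strict_of ord u t"
    "\<And>u. u \<in> Poly_Mapping.keys f' \<Longrightarrow> \<exists>w\<in>Poly_Mapping.keys f. ord u w"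
proof -
  obtain h where h: "h \<in> J" "h \<noteq> 0" "lterm ord h = t" "lcoeff ord h = 1"
    using monic_with_lterm[OF assms(1,3)] by blast
  define f' where "f' = f - Poly_Mapping.single 0 (Poly_Mapping.lookup f t) * h"
  have cancel: "Poly_Mapping.lookup f' t = 0"
      "\<And>s. s \<in> Poly_Mapping.keys f' \<Longrightarrow> s \<in> Poly_Mapping.keys f \<or> ord s t"
    using cancel_lterm[where g = h and u = 0] h(3,4) unfolding f'_def by simp_all
  show ?thesis
  proof (rule that)
    show "f - f' \<in> J"
      using ideal_mult[OF assms(1) h(1)] by (simp add: f'_def)
    show "strict_of ord u t" if "u \<in> Poly_Mapping.keys f'" "u \<in> lterms ord J" for u
    proof -
      have "u \<noteq> t"
        using that(1) cancel(1) by (auto simp: in_keys_iff)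
      moreover have "ord u t"
        using cancel(2)[OF that(1)] assms(4) that(2) by blast
      ultimately show ?thesis
        by (simp add: strict_of_def)
    qed
    show "\<exists>w\<in>Poly_Mapping.keys f. ord u w" if "u \<in> Poly_Mapping.keys f'" for u
      using that cancel(2) assms(2) by blast
  qed
qed

lemma is_normal_form_trans:
  fixes J :: "('v, 'k::comm_ring_1) mpoly set"
  assumes "is_ideal J" "f - f' \<in> J" "\<And>u. u \<in> Poly_Mapping.keys f' \<Longrightarrow> \<exists>w\<in>Poly_Mapping.keys f. ord u w"
    and "is_normal_form ord J f' r"
  shows "is_normal_form ord J f r"
proof -
  have "f - r = (f - f') + (f' - r)"
    by simp
  then have "f - r \<in> J"
    using assms(4) ideal_add[OF assms(1,2)] unfolding is_normal_form_def by metis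
  with assms(3,4) show ?thesis
    unfolding is_normal_form_def using tord.order.trans by blast
qed

end

context finite_term_ordering
begin

lemma normal_form_exists:
  fixes J :: "('v, 'k::field) mpoly set"
  assumes "is_ideal J"
  obtains r where "is_normal_form ord J f r"
proof -
  have "\<exists>r. is_normal_form ord J f r"
    if "\<And>u. u \<in> Poly_Mapping.keys f \<Longrightarrow> u \<in> lterms ord J \<Longrightarrow> strict_of ord u t" for f t
    using that
  proof (induction t arbitrary: f rule: tord.less_induct)
    case (less t)
    show ?case
    proof (cases "Poly_Mapping.keys f \<inter> lterms ord J = {}")
      case True
      then have "is_normal_form ord J f f"
        using ideal_zero[OF assms] by (auto simp: is_normal_form_def)
      then show ?thesis ..
    next
      case False
      define t' where "t' = tord.Max (Poly_Mapping.keys f \<inter> lterms ord J)"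
      have t': "t' \<in> Poly_Mapping.keys f" "t' \<in> lterms ord J"
        "\<And>u. u \<in> Poly_Mapping.keys f \<Longrightarrow> u \<in> lterms ord J \<Longrightarrow> ord u t'"
        using False tord.Max_in[of "Poly_Mapping.keys f \<inter> lterms ord J"] by (auto simp: t'_def)
      obtain f' where f': "f - f' \<in> J"
          "\<And>u. u \<in> Poly_Mapping.keys f' \<Longrightarrow> u \<in> lterms ord J \<Longrightarrow> strict_of ord u t'"
          "\<And>u. u \<in> Poly_Mapping.keys f' \<Longrightarrow> \<exists>w\<in>Poly_Mapping.keys f. ord u w"
        using reduction_step[OF assms t'] by blast
      obtain r where "is_normal_form ord J f' r"
        using less.IH[OF less.prems[OF t'(1,2)] f'(2)] by blast
      then show ?thesis
        using is_normal_form_trans[OF assms f'(1,3)] by blast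
    qed
  qed
  then show ?thesis
    using exists_strict_upper_bound[of "Poly_Mapping.keys f"] that by auto
qed

lemma reduced_generator:
  fixes J :: "('v, 'k::field) mpoly set"
  assumes "is_ideal J" "s \<in> lterms ord J"
  shows "\<exists>g\<in>J. g \<noteq> 0 \<and> lterm ord g = s \<and> lcoeff ord g = 1 \<and>
    (\<forall>u\<in>Poly_Mapping.keys g. u \<noteq> s \<longrightarrow> u \<notin> lterms ord J)"
proof -
  obtain r where r: "is_normal_form ord J (Poly_Mapping.single s 1) r"
    using normal_form_exists[OF assms(1)] .
  define g where "g = Poly_Mapping.single s 1 - r"
  have r_keys: "u \<notin> lterms ord J" "ord u s" if "u \<in> Poly_Mapping.keys r" for u
    using r that unfolding is_normal_form_def by auto
  have g_keys: "Poly_Mapping.keys g \<subseteq> insert s (Poly_Mapping.keys r)"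
    by (auto simp: g_def in_keys_iff lookup_minus lookup_single)
  have "Poly_Mapping.lookup g s = 1"
    using r_keys(1) assms(2) by (auto simp: g_def lookup_minus in_keys_iff)
  then have "s \<in> Poly_Mapping.keys g"
    by (simp add: in_keys_iff)
  then have "g \<noteq> 0" "lterm ord g = s"
    using g_keys r_keys(2) by (auto intro: lterm_eqI)
  moreover have "g \<in> J"
    using r by (simp add: g_def is_normal_form_def)
  moreover have "lcoeff ord g = 1"
    using \<open>lterm ord g = s\<close> \<open>Poly_Mapping.lookup g s = 1\<close> by (simp add: lcoeff_def)
  ultimately show ?thesis
    using g_keys r_keys(1) by blast
qed

lemma reduced_GB_exists:
  fixes J :: "('v, 'k::field) mpoly set"
  assumes "is_ideal J"
  shows "\<exists>G. is_reduced_GB ord J G"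
proof -
  have "\<forall>s\<in>lterms ord J. \<exists>g. g \<in> J \<and> g \<noteq> 0 \<and> lterm ord g = s \<and> lcoeff ord g = 1 \<and>
      (\<forall>u\<in>Poly_Mapping.keys g. u \<noteq> s \<longrightarrow> u \<notin> lterms ord J)"
    using reduced_generator[OF assms] by blast
  then obtain g where g: "\<And>s. s \<in> lterms ord J \<Longrightarrow> g s \<in> J \<and> g s \<noteq> 0 \<and> lterm ord (g s) = s \<and>
      lcoeff ord (g s) = 1 \<and> (\<forall>u\<in>Poly_Mapping.keys (g s). u \<noteq> s \<longrightarrow> u \<notin> lterms ord J)"
    by (metis (no_types, lifting) bchoice)
  have min: "s \<in> lterms ord J" if "s \<in> min_lterms ord J" for s
    using that by (simp add: min_lterms_def)
  define G where "G = g ` min_lterms ord J"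
  have "is_GB ord J G"
    unfolding is_GB_def
  proof (intro conjI ballI impI)
    show "finite G"
      by (simp add: G_def finite_min_lterms)
    show "G \<subseteq> J" "0 \<notin> G"
      using g min by (fastforce simp: G_def)+
    show "\<exists>h\<in>G. pp_dvd (lterm ord h) (lterm ord f)" if "f \<in> J" "f \<noteq> 0" for f
    proof -
      have "lterm ord f \<in> lterms ord J"
        using that by (simp add: lterms_def)
      then obtain m where "m \<in> min_lterms ord J" "pp_dvd m (lterm ord f)"
        by (rule min_lterms_dvd)
      then show ?thesis
        using g min by (auto simp: G_def)
    qed
  qed
  moreover have "\<not> pp_dvd (lterm ord h) u"
    if h: "h \<in> G" "h' \<in> G" "h \<noteq> h'" "u \<in> Poly_Mapping.keys h'" for h h' u
  proof
    assume dvd: "pp_dvd (lterm ord h) u"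
    obtain s s' where s: "s \<in> min_lterms ord J" "h = g s" and s': "s' \<in> min_lterms ord J" "h' = g s'"
      using h(1,2) by (auto simp: G_def)
    have "u \<in> lterms ord J"
      using lterms_dvd_closed[OF assms _ dvd] g[OF min[OF s(1)]] min[OF s(1)] s(2) by simp
    then have "u = s'"
      using g[OF min[OF s'(1)]] h(4) s'(2) by blast
    then show False
      using dvd s s' h(3) g[OF min[OF s(1)]] min[OF s'(1)] unfolding min_lterms_def by auto
  qed
  ultimately have "is_reduced_GB ord J G"
    using g min by (auto simp: is_reduced_GB_def G_def)
  then show ?thesis ..
qed

end

context finite_term_ordering
begin

lemma reduced_GB_key_in_lterms:
  fixes J :: "('v, 'k::field) mpoly set"
  assumes "is_reduced_GB ord J G" "g \<in> G" "u \<in> Poly_Mapping.keys g" "u \<in> lterms ord J"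
  shows "u = lterm ord g"
proof -
  obtain m where m: "m \<in> min_lterms ord J" "pp_dvd m u"
    using assms(4) by (rule min_lterms_dvd)
  then obtain h where h: "h \<in> G" "lterm ord h = m"
    using lterm_image_minimal_GB[OF reduced_GB_is_minimal[OF assms(1)]] by (metis imageE)
  have "h = g"
    using assms(1-3) h m(2) unfolding is_reduced_GB_def by blast
  then show ?thesis
    using h m(2) pp_dvd_imp_le le_lterm[OF assms(3)] by (blast intro: tord.order.antisym)
qed

lemma reduced_GB_unique:
  fixes J :: "('v, 'k::field) mpoly set"
  assumes "is_ideal J" "is_reduced_GB ord J G" "is_reduced_GB ord J G'"
  shows "G \<subseteq> G'"
proof
  fix g assume "g \<in> G"
  have "lterm ord ` G = lterm ord ` G'"
    using lterm_image_minimal_GB[OF reduced_GB_is_minimal[OF assms(2)]]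
      lterm_image_minimal_GB[OF reduced_GB_is_minimal[OF assms(3)]] by simp
  then obtain g' where g': "g' \<in> G'" "lterm ord g' = lterm ord g"
    using \<open>g \<in> G\<close> by (metis imageE imageI)
  have "lcoeff ord g = 1" "lcoeff ord g' = 1"
    using assms(2,3) \<open>g \<in> G\<close> g'(1) unfolding is_reduced_GB_def by blast+
  then have monic: "Poly_Mapping.lookup g (lterm ord g) = 1" "Poly_Mapping.lookup g' (lterm ord g) = 1"
    by (simp_all add: lcoeff_def g'(2))
  have "G \<subseteq> J" "G' \<subseteq> J"
    using assms(2,3) by (simp_all add: is_reduced_GB_def is_GB_def)
  then have in_J: "g - g' \<in> J"
    using ideal_diff[OF assms(1)] \<open>g \<in> G\<close> g'(1) by blast
  have "g = g'"
  proof (rule ccontr)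
    assume "g \<noteq> g'"
    then have u: "lterm ord (g - g') \<in> lterms ord J" "lterm ord (g - g') \<in> Poly_Mapping.keys (g - g')"
      using in_J by (auto simp: lterms_def lterm_in_keys)
    then consider "lterm ord (g - g') \<in> Poly_Mapping.keys g" | "lterm ord (g - g') \<in> Poly_Mapping.keys g'"
      using in_keys_diff[OF u(2)] by blast
    then have "lterm ord (g - g') = lterm ord g"
      using reduced_GB_key_in_lterms[OF assms(2) \<open>g \<in> G\<close> _ u(1)]
        reduced_GB_key_in_lterms[OF assms(3) g'(1) _ u(1)] g'(2) by cases simp_all
    then show False
      using u(2) monic by (simp add: in_keys_iff lookup_minus)
  qed
  with g'(1) show "g \<in> G'"
    by simp
qed

lemma is_reduced_GB_reduced_GB:
  fixes J :: "('v, 'k::field) mpoly set"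
  assumes "is_ideal J"
  shows "is_reduced_GB ord J (reduced_GB ord J)"
proof -
  obtain G where G: "is_reduced_GB ord J G"
    using reduced_GB_exists[OF assms] ..
  have "G' = G" if "is_reduced_GB ord J G'" for G'
    using reduced_GB_unique[OF assms] G that by blast
  then show ?thesis
    unfolding reduced_GB_def by (rule theI[where P = "is_reduced_GB ord J", OF G])
qed

lemma O_tuple_eq:
  fixes J :: "('v, 'k::field) mpoly set"
  assumes "is_ideal J"
  shows "O_tuple ord J = tord.sorted_list_of_set (min_lterms ord J)"
proof -
  let ?T = "tord.sorted_list_of_set (min_lterms ord J)"
  have T: "sorted_wrt (strict_of ord) ?T" "set ?T = min_lterms ord J"
    by (simp_all add: finite_min_lterms)
  let ?P = "\<lambda>T. \<exists>G. is_minimal_GB ord J G \<and> sorted_wrt (strict_of ord) T \<and> set T = lterm ord ` G"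
  have "is_minimal_GB ord J (reduced_GB ord J)"
    by (rule reduced_GB_is_minimal[OF is_reduced_GB_reduced_GB[OF assms]])
  then have "?P ?T"
    using T lterm_image_minimal_GB by blast
  then have "?P (O_tuple ord J)"
    unfolding O_tuple_def by (rule someI[where P = ?P])
  then have "sorted_wrt (strict_of ord) (O_tuple ord J)" "set (O_tuple ord J) = min_lterms ord J"
    using lterm_image_minimal_GB by blast+
  with T show ?thesis
    by (intro tord.strict_sorted_equal) simp_all
qed

end

section \<open>p-integral rationals and their reduction modulo p\<close>

definition p_integral :: "nat \<Rightarrow> rat \<Rightarrow> bool" where
  "p_integral p r \<longleftrightarrow> (\<exists>a b. r = of_int a / of_int b \<and> \<not> int p dvd b)"

lemma p_integral_of_int: "prime p \<Longrightarrow> p_integral p (of_int k)"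
  unfolding p_integral_def by (intro exI[of _ k] exI[of _ 1]) (simp add: prime_nat_iff)

lemma p_integral_add:
  assumes "prime p" "p_integral p x" "p_integral p y"
  shows "p_integral p (x + y)"
proof -
  obtain a b c d where "x = of_int a / of_int b" "\<not> int p dvd b" "y = of_int c / of_int d" "\<not> int p dvd d"
    using assms(2,3) unfolding p_integral_def by blast
  moreover from this have "b \<noteq> 0" "d \<noteq> 0"
    by auto
  ultimately have "x + y = of_int (a * d + c * b) / of_int (b * d)" "\<not> int p dvd b * d"
    using assms(1) by (simp_all add: field_simps prime_dvd_mult_iff)
  then show ?thesis
    unfolding p_integral_def by blast
qed

lemma p_integral_mult:
  assumes "prime p" "p_integral p x" "p_integral p y"
  shows "p_integral p (x * y)"
proof -
  obtain a b c d where "x = of_int a / of_int b" "\<not> int p dvd b" "y = of_int c / of_int d" "\<not> int p dvd d"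
    using assms(2,3) unfolding p_integral_def by blast
  then have "x * y = of_int (a * c) / of_int (b * d)" "\<not> int p dvd b * d"
    using assms(1) by (simp_all add: prime_dvd_mult_iff)
  then show ?thesis
    unfolding p_integral_def by blast
qed

lemma p_integral_diff:
  assumes "prime p" "p_integral p x" "p_integral p y"
  shows "p_integral p (x - y)"
  using p_integral_add[OF assms(1,2) p_integral_mult[OF assms(1) p_integral_of_int[OF assms(1)] assms(3)]]
  by (metis diff_conv_add_uminus mult_minus1 of_int_minus of_int_1)

lemma p_integral_if_not_dvd_denominator: "\<not> int p dvd snd (quotient_of r) \<Longrightarrow> p_integral p r"
  unfolding p_integral_def by (metis prod.collapse quotient_of_div)

lemma p_integral_power_mult:
  assumes "prime p"
  shows "\<exists>e. p_integral p (of_nat p ^ e * r)"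
proof -
  obtain a b where r: "quotient_of r = (a, b)"
    by fastforce
  then have "b \<noteq> 0" "r = of_int a / of_int b"
    using quotient_of_denom_pos quotient_of_div by fastforce+
  define k where "k = multiplicity (int p) b"
  obtain b' where b': "b = int p ^ k * b'" "\<not> int p dvd b'"
    unfolding k_def
    by (rule multiplicity_decompose') (use \<open>b \<noteq> 0\<close> prime_gt_1_nat[OF assms] in auto)
  with \<open>b \<noteq> 0\<close> have "of_nat p ^ k * r = of_int a / of_int b'"
    using prime_gt_0_nat[OF assms] by (simp add: \<open>r = _\<close> field_simps)
  with b'(2) show ?thesis
    unfolding p_integral_def by blast
qed

lemma p_integral_power_mult_mono:
  assumes "prime p" "p_integral p (of_nat p ^ e * r)" "e \<le> e'"
  shows "p_integral p (of_nat p ^ e' * r)"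
proof -
  have eq: "of_nat p ^ e' * r = of_int (int p ^ (e' - e)) * (of_nat p ^ e * r)"
    using assms(3) by (simp flip: power_add)
  show ?thesis
    unfolding eq by (rule p_integral_mult[OF assms(1) p_integral_of_int[OF assms(1)] assms(2)])
qed

lemma of_int_mod_ring_eq_0_iff: "(of_int a :: 'p::prime_card mod_ring) = 0 \<longleftrightarrow> int CARD('p) dvd a"
  by (simp add: of_int_eq_0_iff_char_dvd)

lemma rat_mod_eq:
  assumes "r = of_int a / of_int b" "\<not> int CARD('p::prime_card) dvd b"
  shows "(rat_mod r :: 'p mod_ring) = of_int a / of_int b"
proof -
  obtain a' b' where q: "quotient_of r = (a', b')"
    by fastforce
  have "b' > 0" "coprime a' b'" "r = of_int a' / of_int b'"
    using quotient_of_denom_pos[OF q] quotient_of_coprime[OF q] quotient_of_div[OF q] by simp_all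
  moreover have "b \<noteq> 0"
    using assms(2) by auto
  ultimately have cross: "a * b' = a' * b"
    using assms(1) by (simp add: frac_eq_eq flip: of_int_mult of_int_eq_iff)
  have prime: "prime (int CARD('p))"
    by (rule prime_card_int)
  have "\<not> int CARD('p) dvd b'"
  proof
    assume "int CARD('p) dvd b'"
    moreover from this have "int CARD('p) dvd a'"
      using cross assms(2) prime by (metis dvd_mult prime_dvd_mult_iff)
    ultimately show False
      using \<open>coprime a' b'\<close> prime not_prime_unit coprime_common_divisor by blast
  qed
  then have "(of_int a' / of_int b' :: 'p mod_ring) = of_int a / of_int b"
    using cross assms(2) by (simp add: frac_eq_eq of_int_mod_ring_eq_0_iff flip: of_int_mult)
  then show ?thesis
    by (simp add: rat_mod_def q)
qed

lemma rat_mod_of_int [simp]: "(rat_mod (of_int k) :: 'p::prime_card mod_ring) = of_int k"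
  using rat_mod_eq[where 'p='p, of "of_int k" k 1] prime_gt_1_nat[OF prime_card[where 'a='p]] by simp

lemma rat_mod_0 [simp]: "(rat_mod 0 :: 'p::prime_card mod_ring) = 0"
  and rat_mod_1 [simp]: "(rat_mod 1 :: 'p::prime_card mod_ring) = 1"
  using rat_mod_of_int[of 0] rat_mod_of_int[of 1] by simp_all

lemma rat_mod_add:
  assumes "p_integral CARD('p::prime_card) x" "p_integral CARD('p) y"
  shows "(rat_mod (x + y) :: 'p mod_ring) = rat_mod x + rat_mod y"
proof -
  obtain a b c d where x: "x = of_int a / of_int b" "\<not> int CARD('p) dvd b"
    and y: "y = of_int c / of_int d" "\<not> int CARD('p) dvd d"
    using assms unfolding p_integral_def by blast
  moreover from this have "b \<noteq> 0" "d \<noteq> 0"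
    by auto
  ultimately have "x + y = of_int (a * d + c * b) / of_int (b * d)" "\<not> int CARD('p) dvd b * d"
    using prime_card_int[where 'a='p] by (simp_all add: field_simps prime_dvd_mult_iff)
  then have "(rat_mod (x + y) :: 'p mod_ring) = of_int (a * d + c * b) / of_int (b * d)"
    by (rule rat_mod_eq)
  also have "\<dots> = of_int a / of_int b + of_int c / of_int d"
    using x(2) y(2) by (simp add: add_frac_eq of_int_mod_ring_eq_0_iff)
  finally show ?thesis
    by (simp add: rat_mod_eq[OF x] rat_mod_eq[OF y])
qed

lemma rat_mod_mult:
  assumes "p_integral CARD('p::prime_card) x" "p_integral CARD('p) y"
  shows "(rat_mod (x * y) :: 'p mod_ring) = rat_mod x * rat_mod y"
proof -
  obtain a b c d where x: "x = of_int a / of_int b" "\<not> int CARD('p) dvd b"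
    and y: "y = of_int c / of_int d" "\<not> int CARD('p) dvd d"
    using assms unfolding p_integral_def by blast
  then have "x * y = of_int (a * c) / of_int (b * d)" "\<not> int CARD('p) dvd b * d"
    using prime_card_int[where 'a='p] by (auto simp: prime_dvd_mult_iff)
  then have "(rat_mod (x * y) :: 'p mod_ring) = of_int (a * c) / of_int (b * d)"
    by (rule rat_mod_eq)
  then show ?thesis
    by (simp add: rat_mod_eq[OF x] rat_mod_eq[OF y])
qed

lemma p_integral_if_rat_mod_eq_0:
  assumes "p_integral CARD('p::prime_card) (of_nat CARD('p) * y)"
    and "(rat_mod (of_nat CARD('p) * y) :: 'p mod_ring) = 0"
  shows "p_integral CARD('p) y"
proof -
  obtain a b where ab: "of_nat CARD('p) * y = of_int a / of_int b" "\<not> int CARD('p) dvd b"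
    using assms(1) unfolding p_integral_def by blast
  then have "int CARD('p) dvd a"
    using assms(2) by (simp add: rat_mod_eq of_int_mod_ring_eq_0_iff)
  then obtain k where "a = int CARD('p) * k"
    by blast
  with ab(1) have "of_nat CARD('p) * y = of_nat CARD('p) * (of_int k / of_int b)"
    by simp
  then have "y = of_int k / of_int b"
    by (subst (asm) mult_left_cancel) simp_all
  with ab(2) show ?thesis
    unfolding p_integral_def by blast
qed

lemma exists_primitive_scaling:
  fixes X :: "rat set"
  assumes "finite X" "1 \<in> X"
  obtains m :: int where "\<And>x. x \<in> X \<Longrightarrow> p_integral CARD('p::prime_card) (of_int m * x)"
    "\<exists>x\<in>X. (rat_mod (of_int m * x) :: 'p mod_ring) \<noteq> 0"
proof -
  let ?p = "CARD('p)"
  have prime: "prime ?p"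
    by (rule prime_card)
  define E where "E = {e. \<forall>x\<in>X. p_integral ?p (of_nat ?p ^ e * x)}"
  obtain ex where ex: "\<And>x. p_integral ?p (of_nat ?p ^ ex x * x)"
    using p_integral_power_mult[OF prime] by metis
  have "sum ex X \<in> E"
    unfolding E_def using p_integral_power_mult_mono[OF prime ex] member_le_sum[OF _ _ assms(1)] by blast
  \<comment> \<open>By minimality of e, some element of X is not p-integral after scaling by p^(e - 1).\<close>
  define e where "e = (LEAST e. e \<in> E)"
  have "e \<in> E"
    unfolding e_def using \<open>sum ex X \<in> E\<close> by (rule LeastI)
  then have integral: "p_integral ?p (of_int (int ?p ^ e) * x)" if "x \<in> X" for x
    using that unfolding E_def by simp
  have "\<exists>x\<in>X. (rat_mod (of_int (int ?p ^ e) * x) :: 'p mod_ring) \<noteq> 0"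
  proof (cases e)
    case 0
    with assms(2) show ?thesis
      by force
  next
    case (Suc e')
    then have "e' \<notin> E"
      using not_less_Least[of e' "\<lambda>e. e \<in> E"] by (simp add: e_def)
    then obtain x where x: "x \<in> X" "\<not> p_integral ?p (of_nat ?p ^ e' * x)"
      unfolding E_def by blast
    have "of_int (int ?p ^ e) * x = of_nat ?p * (of_nat ?p ^ e' * x)"
      by (simp add: Suc)
    then show ?thesis
      using x integral[OF x(1)] p_integral_if_rat_mod_eq_0 by metis
  qed
  with integral show ?thesis
    by (rule that)
qed

section \<open>Reduction of polynomials modulo a prime\<close>

definition p_integral_poly :: "nat \<Rightarrow> ('v, rat) mpoly \<Rightarrow> bool" where
  "p_integral_poly p F \<longleftrightarrow> (\<forall>t. p_integral p (Poly_Mapping.lookup F t))"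

lemma p_integral_poly_add:
  "prime p \<Longrightarrow> p_integral_poly p F \<Longrightarrow> p_integral_poly p H \<Longrightarrow> p_integral_poly p (F + H)"
  by (simp add: p_integral_poly_def lookup_add p_integral_add)

lemma p_integral_poly_diff:
  "prime p \<Longrightarrow> p_integral_poly p F \<Longrightarrow> p_integral_poly p H \<Longrightarrow> p_integral_poly p (F - H)"
  by (simp add: p_integral_poly_def lookup_minus p_integral_diff)

lemma p_integral_poly_single_mult:
  assumes "prime p" "p_integral p c" "p_integral_poly p F"
  shows "p_integral_poly p (Poly_Mapping.single u c * F)"
  using assms p_integral_mult p_integral_of_int[OF assms(1), of 0]
  by (simp add: p_integral_poly_def lookup_single_mult)

lemma p_integral_poly_if_good:
  assumes "good ord I p" "g \<in> reduced_GB ord I"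
  shows "p_integral_poly p g"
  unfolding p_integral_poly_def
proof
  fix t
  show "p_integral p (Poly_Mapping.lookup g t)"
  proof (cases "t \<in> Poly_Mapping.keys g")
    case True
    then have "snd (quotient_of (Poly_Mapping.lookup g t)) dvd den_poly g"
      unfolding den_poly_def by (intro dvd_Lcm) blast
    also have "den_poly g dvd den_set (reduced_GB ord I)"
      unfolding den_set_def using assms(2) by (intro dvd_Lcm) blast
    finally show ?thesis
      using assms(1) unfolding good_def by (metis dvd_trans p_integral_if_not_dvd_denominator)
  next
    case False
    moreover have "\<not> int p dvd 1"
      using assms(1) unfolding good_def by (metis one_dvd dvd_trans)
    ultimately show ?thesis
      unfolding p_integral_def by (intro exI[of _ 0] exI[of _ 1]) (simp add: in_keys_iff)
  qed
qed

lemma lookup_pi_mod [simp]: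
  "Poly_Mapping.lookup (pi_mod F :: ('v, 'p::prime_card mod_ring) mpoly) t = rat_mod (Poly_Mapping.lookup F t)"
  by (simp add: pi_mod_def map.rep_eq when_def)

lemma keys_pi_mod_subset: "Poly_Mapping.keys (pi_mod F :: ('v, 'p::prime_card mod_ring) mpoly) \<subseteq> Poly_Mapping.keys F"
  by (auto simp: in_keys_iff)

lemma pi_mod_zero [simp]: "(pi_mod 0 :: ('v, 'p::prime_card mod_ring) mpoly) = 0"
  by (simp add: poly_mapping_eq_iff fun_eq_iff)

lemma pi_mod_add:
  assumes "p_integral_poly CARD('p::prime_card) F" "p_integral_poly CARD('p) H"
  shows "(pi_mod (F + H) :: ('v, 'p mod_ring) mpoly) = pi_mod F + pi_mod H"
  using assms by (simp add: poly_mapping_eq_iff fun_eq_iff lookup_add rat_mod_add p_integral_poly_def)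

lemma pi_mod_single_mult:
  assumes "p_integral CARD('p::prime_card) c" "p_integral_poly CARD('p) F"
  shows "(pi_mod (Poly_Mapping.single u c * F) :: ('v, 'p mod_ring) mpoly) =
    Poly_Mapping.single u (rat_mod c) * pi_mod F"
  using assms by (simp add: poly_mapping_eq_iff fun_eq_iff lookup_single_mult rat_mod_mult p_integral_poly_def)

lemma single_add_induct:
  assumes "P 0" "\<And>k c f. P f \<Longrightarrow> P (Poly_Mapping.single k c + f)"
  shows "P f"
proof (induction f rule: Poly_Mapping.update_induct)
  case (update f a b)
  then have "Poly_Mapping.update a b f = Poly_Mapping.single a b + f"
    by (auto simp: poly_mapping_eq_iff fun_eq_iff lookup_update lookup_add lookup_single in_keys_iff)
  with update.IH show ?case
    by (simp add: assms(2))
qed (rule assms(1))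

lemma is_ideal_pi_mod_image:
  fixes I :: "('v, rat) mpoly set"
  assumes "is_ideal I"
  shows "is_ideal (pi_mod ` {F \<in> I. p_integral_poly CARD('p::prime_card) F} :: ('v, 'p mod_ring) mpoly set)"
    (is "is_ideal ?J")
proof -
  have prime: "prime CARD('p)"
    by (rule prime_card)
  have zero: "0 \<in> ?J"
    using ideal_zero[OF assms] p_integral_of_int[OF prime, of 0] by (force simp: p_integral_poly_def)
  have add: "f + g \<in> ?J" if fg: "f \<in> ?J" "g \<in> ?J" for f g
  proof -
    obtain F G where "f = pi_mod F" "F \<in> I" "p_integral_poly CARD('p) F"
      and "g = pi_mod G" "G \<in> I" "p_integral_poly CARD('p) G"
      using fg by blast
    then have "f + g = pi_mod (F + G)" "F + G \<in> I" "p_integral_poly CARD('p) (F + G)"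
      by (simp_all add: pi_mod_add ideal_add[OF assms] p_integral_poly_add[OF prime])
    then show ?thesis
      by blast
  qed
  have "h * f \<in> ?J" if "f \<in> ?J" for f h
  proof (induction h rule: single_add_induct)
    case (2 k c h)
    obtain F where F: "f = pi_mod F" "F \<in> I" "p_integral_poly CARD('p) F"
      using \<open>f \<in> ?J\<close> by blast
    define c' :: rat where "c' = of_int (to_int_mod_ring c)"
    have "p_integral CARD('p) c'" "rat_mod c' = c"
      using p_integral_of_int[OF prime] by (simp_all add: c'_def of_int_of_int_mod_ring)
    then have "Poly_Mapping.single k c * f = pi_mod (Poly_Mapping.single k c' * F)"
      "Poly_Mapping.single k c' * F \<in> I" "p_integral_poly CARD('p) (Poly_Mapping.single k c' * F)"
      using F ideal_mult[OF assms F(2)] by (simp_all add: pi_mod_single_mult p_integral_poly_single_mult[OF prime])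
    then have "Poly_Mapping.single k c * f \<in> ?J"
      by blast
    with 2 show ?case
      by (simp add: distrib_right add)
  qed (simp add: zero)
  with zero add show ?thesis
    unfolding is_ideal_def by blast
qed

context term_ordering
begin

lemma lterm_pi_mod:
  assumes "(rat_mod (lcoeff ord F) :: 'p::prime_card mod_ring) \<noteq> 0"
  shows "lterm ord (pi_mod F :: ('v, 'p mod_ring) mpoly) = lterm ord F"
    and "lcoeff ord (pi_mod F :: ('v, 'p mod_ring) mpoly) = rat_mod (lcoeff ord F)"
proof -
  show "lterm ord (pi_mod F :: ('v, 'p mod_ring) mpoly) = lterm ord F"
  proof (rule lterm_eqI)
    show "lterm ord F \<in> Poly_Mapping.keys (pi_mod F :: ('v, 'p mod_ring) mpoly)"
      using assms by (simp add: in_keys_iff lcoeff_def)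
    show "ord s (lterm ord F)" if "s \<in> Poly_Mapping.keys (pi_mod F :: ('v, 'p mod_ring) mpoly)" for s
      using le_lterm keys_pi_mod_subset that by blast
  qed
  then show "lcoeff ord (pi_mod F :: ('v, 'p mod_ring) mpoly) = rat_mod (lcoeff ord F)"
    by (simp add: lcoeff_def)
qed

end

context finite_term_ordering
begin

lemma p_integral_division_step:
  fixes I :: "('v, rat) mpoly set"
  assumes "is_ideal I" "is_GB ord I G" "\<And>g. g \<in> G \<Longrightarrow> lcoeff ord g = 1"
    and "\<And>g. g \<in> G \<Longrightarrow> p_integral_poly p g" "prime p"
    and "F \<in> I" "p_integral_poly p F" "F \<noteq> 0"
  obtains g u F' where "g \<in> G" "F = F' + Poly_Mapping.single u (lcoeff ord F) * g"
    "F' \<in> I" "p_integral_poly p F'" "F' \<noteq> 0 \<Longrightarrow> strict_of ord (lterm ord F') (lterm ord F)"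
    "lterm ord F = u + lterm ord g"
proof -
  let ?t = "lterm ord F"
  obtain g where g: "g \<in> G" "pp_dvd (lterm ord g) ?t"
    using assms(2,6,8) unfolding is_GB_def by blast
  define u where "u = ?t - lterm ord g"
  define F' where "F' = F - Poly_Mapping.single u (lcoeff ord F) * g"
  have t: "?t = u + lterm ord g"
    using pp_dvd_add_diff[OF g(2)] by (simp add: u_def add.commute)
  have c: "p_integral p (lcoeff ord F)"
    using assms(7) by (simp add: lcoeff_def p_integral_poly_def)
  have cancel: "Poly_Mapping.lookup F' ?t = 0"
      "\<And>s. s \<in> Poly_Mapping.keys F' \<Longrightarrow> s \<in> Poly_Mapping.keys F \<or> ord s ?t"
    using cancel_lterm[OF assms(3)[OF g(1)] t] unfolding F'_def lcoeff_def by simp_all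
  have "strict_of ord (lterm ord F') ?t" if "F' \<noteq> 0"
  proof -
    have "lterm ord F' \<in> Poly_Mapping.keys F'"
      by (rule lterm_in_keys[OF that])
    then have "ord (lterm ord F') ?t" "lterm ord F' \<noteq> ?t"
      using cancel(1) le_lterm[of "lterm ord F'" F] cancel(2) by (auto simp: in_keys_iff)
    then show ?thesis
      by (simp add: strict_of_def)
  qed
  moreover have "F' \<in> I" "p_integral_poly p F'"
    using assms(1,4,5,6,7) g(1) assms(2) c unfolding F'_def is_GB_def
    by (auto intro: ideal_diff ideal_mult p_integral_poly_diff p_integral_poly_single_mult)
  moreover have "F = F' + Poly_Mapping.single u (lcoeff ord F) * g"
    by (simp add: F'_def)
  ultimately show ?thesis
    using that g(1) t by blast
qed

text \<open>Together, the two conclusions say that the reductions modulo p of a monic p-integral Groebner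
  basis G of I form a Groebner basis of the reduction of the p-integral part of I. The division
  algorithm, run over the p-integral rationals, commutes with reduction modulo p.\<close>

lemma pi_mod_GB_division:
  fixes I :: "('v, rat) mpoly set"
  assumes "is_ideal I" "is_GB ord I G" "\<And>g. g \<in> G \<Longrightarrow> lcoeff ord g = 1"
    and "\<And>g. g \<in> G \<Longrightarrow> p_integral_poly CARD('p::prime_card) g"
    and "F \<in> I" "p_integral_poly CARD('p) F"
  shows "(pi_mod F :: ('v, 'p mod_ring) mpoly) \<in> ideal_gen (pi_mod ` G)"
    and "(pi_mod F :: ('v, 'p mod_ring) mpoly) \<noteq> 0 \<Longrightarrow>
      \<exists>g\<in>G. pp_dvd (lterm ord g) (lterm ord (pi_mod F :: ('v, 'p mod_ring) mpoly))"
proof -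
  let ?J = "ideal_gen (pi_mod ` G) :: ('v, 'p mod_ring) mpoly set"
  define P where "P F \<longleftrightarrow> (pi_mod F :: ('v, 'p mod_ring) mpoly) \<in> ?J \<and>
    ((pi_mod F :: ('v, 'p mod_ring) mpoly) \<noteq> 0 \<longrightarrow>
      (\<exists>g\<in>G. pp_dvd (lterm ord g) (lterm ord (pi_mod F :: ('v, 'p mod_ring) mpoly))))" for F
  have prime: "prime CARD('p)"
    by (rule prime_card)
  have J: "is_ideal ?J" "pi_mod ` G \<subseteq> ?J"
    by (rule is_ideal_ideal_gen, rule ideal_gen_subset)
  have "P 0"
    using ideal_zero[OF J(1)] by (simp add: P_def)
  moreover have "P F" if "F \<in> I" "p_integral_poly CARD('p) F" "F \<noteq> 0" "lterm ord F = t" for F t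
    using that
  proof (induction t arbitrary: F rule: tord.less_induct)
    case (less t)
    define c where "c = lcoeff ord F"
    obtain g u F' where g: "g \<in> G" "F = F' + Poly_Mapping.single u c * g"
        and F': "F' \<in> I" "p_integral_poly CARD('p) F'" "F' \<noteq> 0 \<Longrightarrow> strict_of ord (lterm ord F') t"
        and t: "t = u + lterm ord g"
      using p_integral_division_step[OF assms(1-4) prime less.prems(1-3)] less.prems(4)
      unfolding c_def by metis
    have c: "p_integral CARD('p) c"
      using less.prems(2) by (simp add: c_def lcoeff_def p_integral_poly_def)
    have "P F'"
      using less.IH F' \<open>P 0\<close> by blast
    have pi_F: "(pi_mod F :: ('v, 'p mod_ring) mpoly) = pi_mod F' + Poly_Mapping.single u (rat_mod c) * pi_mod g"
      using pi_mod_add[OF F'(2) p_integral_poly_single_mult[OF prime c assms(4)[OF g(1)]]]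
        pi_mod_single_mult[OF c assms(4)[OF g(1)]] g(2) by simp
    have "(pi_mod F :: ('v, 'p mod_ring) mpoly) \<in> ?J"
      using \<open>P F'\<close> g(1) J unfolding pi_F P_def by (blast intro: ideal_add ideal_mult)
    moreover have "\<exists>g\<in>G. pp_dvd (lterm ord g) (lterm ord (pi_mod F :: ('v, 'p mod_ring) mpoly))"
      if "(pi_mod F :: ('v, 'p mod_ring) mpoly) \<noteq> 0"
    proof (cases "(rat_mod c :: 'p mod_ring) = 0")
      case True
      then show ?thesis
        using \<open>P F'\<close> that unfolding pi_F P_def by simp
    next
      case False
      then have "lterm ord (pi_mod F :: ('v, 'p mod_ring) mpoly) = t"
        using lterm_pi_mod(1)[where 'p='p] less.prems(4) by (simp add: c_def)
      with g(1) t show ?thesis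
        by (metis add.commute pp_dvd_add)
    qed
    ultimately show ?case
      unfolding P_def by blast
  qed
  ultimately have "P F"
    using assms(5,6) by blast
  then show "(pi_mod F :: ('v, 'p mod_ring) mpoly) \<in> ideal_gen (pi_mod ` G)"
    and "(pi_mod F :: ('v, 'p mod_ring) mpoly) \<noteq> 0 \<Longrightarrow>
      \<exists>g\<in>G. pp_dvd (lterm ord g) (lterm ord (pi_mod F :: ('v, 'p mod_ring) mpoly))"
    unfolding P_def by blast+
qed

lemma minimal_GB_pi_mod:
  fixes I :: "('v, rat) mpoly set"
  assumes "is_ideal I" "is_minimal_GB ord I G" "\<And>g. g \<in> G \<Longrightarrow> p_integral_poly CARD('p::prime_card) g"
  shows "is_minimal_GB ord (pi_mod ` {F \<in> I. p_integral_poly CARD('p) F}) (pi_mod ` G :: ('v, 'p mod_ring) mpoly set)"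
proof -
  have G: "is_GB ord I G" "\<And>g. g \<in> G \<Longrightarrow> lcoeff ord g = 1"
    and antichain: "\<And>g g'. g \<in> G \<Longrightarrow> g' \<in> G \<Longrightarrow> g \<noteq> g' \<Longrightarrow> \<not> pp_dvd (lterm ord g) (lterm ord g')"
    using assms(2) unfolding is_minimal_GB_def by blast+
  then have "finite G" "G \<subseteq> I"
    unfolding is_GB_def by blast+
  have lterm_pi: "lterm ord (pi_mod g :: ('v, 'p mod_ring) mpoly) = lterm ord g"
      "lcoeff ord (pi_mod g :: ('v, 'p mod_ring) mpoly) = 1" if "g \<in> G" for g
    using lterm_pi_mod[where 'p='p and F = g] G(2)[OF that] by simp_all
  have "is_GB ord (pi_mod ` {F \<in> I. p_integral_poly CARD('p) F}) (pi_mod ` G :: ('v, 'p mod_ring) mpoly set)"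
    unfolding is_GB_def
  proof (intro conjI ballI impI)
    show "finite (pi_mod ` G :: ('v, 'p mod_ring) mpoly set)"
      using \<open>finite G\<close> by simp
    show "(pi_mod ` G :: ('v, 'p mod_ring) mpoly set) \<subseteq> pi_mod ` {F \<in> I. p_integral_poly CARD('p) F}"
      using \<open>G \<subseteq> I\<close> assms(3) by blast
    show "0 \<notin> (pi_mod ` G :: ('v, 'p mod_ring) mpoly set)"
    proof
      assume "0 \<in> (pi_mod ` G :: ('v, 'p mod_ring) mpoly set)"
      then obtain g where "g \<in> G" "(pi_mod g :: ('v, 'p mod_ring) mpoly) = 0"
        by auto
      then show False
        using lterm_pi(2)[of g] by (simp add: lcoeff_def)
    qed
    show "\<exists>h\<in>(pi_mod ` G :: ('v, 'p mod_ring) mpoly set). pp_dvd (lterm ord h) (lterm ord f)"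
      if f: "f \<in> pi_mod ` {F \<in> I. p_integral_poly CARD('p) F}" "f \<noteq> 0" for f :: "('v, 'p mod_ring) mpoly"
    proof -
      obtain F where F: "f = pi_mod F" "F \<in> I" "p_integral_poly CARD('p) F"
        using f(1) by blast
      then obtain g where g: "g \<in> G" "pp_dvd (lterm ord g) (lterm ord f)"
        using pi_mod_GB_division(2)[OF assms(1) G(1) G(2) assms(3) F(2,3)] f(2) by blast
      then have "pp_dvd (lterm ord (pi_mod g :: ('v, 'p mod_ring) mpoly)) (lterm ord f)"
        using lterm_pi(1) by simp
      with g(1) show ?thesis
        by blast
    qed
  qed
  moreover have "\<not> pp_dvd (lterm ord h) (lterm ord h')"
    if "h \<in> pi_mod ` G" "h' \<in> pi_mod ` G" "h \<noteq> h'" for h h' :: "('v, 'p mod_ring) mpoly"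
    using that antichain lterm_pi(1) by fastforce
  ultimately show ?thesis
    using lterm_pi(2) unfolding is_minimal_GB_def by blast
qed

end

lemma red_ideal_eq_pi_mod_image:
  fixes I :: "('v::finite, rat) mpoly set"
  assumes "term_order \<sigma>" "is_ideal I" "good \<sigma> I CARD('p::prime_card)"
  shows "(red_ideal \<sigma> I :: ('v, 'p mod_ring) mpoly set) = pi_mod ` {F \<in> I. p_integral_poly CARD('p) F}"
proof -
  interpret \<sigma>: finite_term_ordering \<sigma>
    by unfold_locales (rule assms(1))
  have G: "is_reduced_GB \<sigma> I (reduced_GB \<sigma> I)"
    by (rule \<sigma>.is_reduced_GB_reduced_GB[OF assms(2)])
  then have "is_GB \<sigma> I (reduced_GB \<sigma> I)" "reduced_GB \<sigma> I \<subseteq> I" "\<And>g. g \<in> reduced_GB \<sigma> I \<Longrightarrow> lcoeff \<sigma> g = 1"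
    unfolding is_reduced_GB_def is_GB_def by blast+
  moreover note integral = p_integral_poly_if_good[OF assms(3)]
  ultimately show ?thesis
    unfolding red_ideal_def
    using is_ideal_pi_mod_image[OF assms(2)] \<sigma>.pi_mod_GB_division(1)[OF assms(2)]
    by (intro equalityI ideal_gen_least) blast+
qed

lemma O_tuple_red_ideal_eq:
  fixes I :: "('v::finite, rat) mpoly set"
  assumes "term_order \<sigma>" "term_order \<tau>" "is_ideal I"
    and "good \<sigma> I CARD('q::prime_card)" "good \<tau> I CARD('q)"
  shows "O_tuple \<tau> (red_ideal \<sigma> I :: ('v, 'q mod_ring) mpoly set) = O_tuple \<tau> I"
proof -
  interpret \<tau>: finite_term_ordering \<tau>
    by unfold_locales (rule assms(2))
  let ?G = "reduced_GB \<tau> I"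
  let ?J = "red_ideal \<sigma> I :: ('v, 'q mod_ring) mpoly set"
  let ?H = "pi_mod ` ?G :: ('v, 'q mod_ring) mpoly set"
  have G: "is_minimal_GB \<tau> I ?G"
    by (rule \<tau>.reduced_GB_is_minimal[OF \<tau>.is_reduced_GB_reduced_GB[OF assms(3)]])
  then have "is_minimal_GB \<tau> ?J ?H"
    unfolding red_ideal_eq_pi_mod_image[OF assms(1,3,4)]
    using \<tau>.minimal_GB_pi_mod[OF assms(3)] p_integral_poly_if_good[OF assms(5)] by blast
  then have "lterm \<tau> ` ?H = min_lterms \<tau> ?J"
    by (rule lterm_image_minimal_GB)
  moreover have "lterm \<tau> ` ?H = lterm \<tau> ` ?G"
    using G \<tau>.lterm_pi_mod(1)[where 'p='q] unfolding is_minimal_GB_def image_image by (intro image_cong) auto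
  ultimately have "min_lterms \<tau> ?J = min_lterms \<tau> I"
    using lterm_image_minimal_GB[OF G] by simp
  moreover have "is_ideal ?J"
    unfolding red_ideal_def by (rule is_ideal_ideal_gen)
  ultimately show ?thesis
    by (simp add: \<tau>.O_tuple_eq assms(3))
qed

lemma exists_pi_mod_nonzero_keys_subset:
  fixes I :: "('v, rat) mpoly set"
  assumes "is_ideal I" "g \<in> I" "Poly_Mapping.lookup g t = 1"
  obtains f where "f \<in> (pi_mod ` {F \<in> I. p_integral_poly CARD('p::prime_card) F} :: ('v, 'p mod_ring) mpoly set)"
    "f \<noteq> 0" "Poly_Mapping.keys f \<subseteq> Poly_Mapping.keys g"
proof -
  let ?X = "Poly_Mapping.lookup g ` Poly_Mapping.keys g"
  have "1 \<in> ?X"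
    using assms(3) by (metis imageI in_keys_iff one_neq_zero)
  then obtain m :: int where m: "\<And>x. x \<in> ?X \<Longrightarrow> p_integral CARD('p) (of_int m * x)"
      "\<exists>x\<in>?X. (rat_mod (of_int m * x) :: 'p mod_ring) \<noteq> 0"
    using exists_primitive_scaling[of ?X] by auto
  define F where "F = Poly_Mapping.single 0 (of_int m) * g"
  have lookup_F: "Poly_Mapping.lookup F s = of_int m * Poly_Mapping.lookup g s" for s
    unfolding F_def by (rule lookup_single_zero_mult)
  have "F \<in> I"
    unfolding F_def by (rule ideal_mult[OF assms(1,2)])
  moreover have "p_integral_poly CARD('p) F"
    unfolding p_integral_poly_def lookup_F
  proof
    fix s
    show "p_integral CARD('p) (of_int m * Poly_Mapping.lookup g s)"
      using m(1)[of "Poly_Mapping.lookup g s"] p_integral_of_int[OF prime_card[where 'a='p], of 0]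
      by (cases "s \<in> Poly_Mapping.keys g") (auto simp: in_keys_iff)
  qed
  moreover have "(pi_mod F :: ('v, 'p mod_ring) mpoly) \<noteq> 0"
    using m(2) by (auto simp: lookup_F poly_mapping_eq_iff fun_eq_iff)
  moreover have "Poly_Mapping.keys (pi_mod F :: ('v, 'p mod_ring) mpoly) \<subseteq> Poly_Mapping.keys g"
    using keys_pi_mod_subset by (fastforce simp: lookup_F in_keys_iff)
  ultimately show ?thesis
    using that by blast
qed

section \<open>Comparing leading-term tuples\<close>

lemma tuple_prec_first_difference:
  assumes "tuple_prec ord T' T"
  obtains k where "k < length T'" "\<And>i. i < k \<Longrightarrow> i < length T \<and> T ! i = T' ! i"
    "k < length T \<Longrightarrow> strict_of ord (T' ! k) (T ! k)"
  using assms unfolding tuple_prec_def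
proof (elim disjE exE conjE)
  assume len: "length T < length T'" and prefix: "take (length T) T' = T"
  have "T ! i = T' ! i" if "i < length T" for i
    using nth_take[OF that, of T'] prefix by simp
  with len show thesis
    using that[of "length T"] by simp
next
  fix k assume k: "k < min (length T) (length T')" "take k T = take k T'" "strict_of ord (T' ! k) (T ! k)"
  have "T ! i = T' ! i" if "i < k" for i
    using nth_take[OF that, of T] nth_take[OF that, of T'] k(2) by simp
  with k show thesis
    using that[of k] by simp
qed

lemma (in term_ordering) not_tuple_prec_if_dominated:
  assumes "sorted_wrt (strict_of ord) T" "sorted_wrt (strict_of ord) S"
    and "\<And>t. t \<in> set T \<Longrightarrow> \<exists>u. ord u t \<and> (\<exists>s\<in>set S. pp_dvd s u) \<and> (\<forall>t'\<in>set T. pp_dvd t' u \<longrightarrow> t' = t)"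
  shows "\<not> tuple_prec ord T S"
proof
  assume "tuple_prec ord T S"
  then obtain k where k: "k < length T" "\<And>i. i < k \<Longrightarrow> i < length S \<and> S ! i = T ! i"
    "k < length S \<Longrightarrow> strict_of ord (T ! k) (S ! k)"
    using tuple_prec_first_difference by blast
  obtain u s where u: "ord u (T ! k)" "s \<in> set S" "pp_dvd s u"
      "\<And>t'. t' \<in> set T \<Longrightarrow> pp_dvd t' u \<Longrightarrow> t' = T ! k"
    using assms(3)[OF nth_mem[OF k(1)]] by blast
  obtain j where j: "j < length S" "s = S ! j"
    using u(2) by (auto simp: in_set_conv_nth)
  show False
  proof (cases "j < k")
    case True
    then have "T ! j = T ! k"
      using u(3,4) k(1,2) j by (metis nth_mem order.strict_trans)
    moreover have "strict_of ord (T ! j) (T ! k)"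
      using sorted_wrt_nth_less[OF assms(1) True k(1)] .
    ultimately show False
      by (simp add: strict_of_def)
  next
    case False
    then have "k < length S"
      using j(1) by simp
    have "ord (S ! k) (S ! j)"
      using sorted_wrt_nth_less[OF assms(2), of k j] j(1) False
      by (cases "k = j") (auto simp: strict_of_def)
    also have "ord (S ! j) (T ! k)"
      using pp_dvd_imp_le[OF u(3)] u(1) j(2) by (blast intro: tord.order.trans)
    finally show False
      using k(3)[OF \<open>k < length S\<close>] by (simp add: tord.not_le[symmetric])
  qed
qed

lemma red_ideal_lterm_below_reduced_GB:
  fixes I :: "('v::finite, rat) mpoly set"
  assumes "term_order \<sigma>" "term_order \<tau>" "is_ideal I" "good \<sigma> I CARD('p::prime_card)"
    and "g \<in> reduced_GB \<tau> I"
  obtains u where "\<tau> u (lterm \<tau> g)" "u \<in> lterms \<tau> (red_ideal \<sigma> I :: ('v, 'p mod_ring) mpoly set)"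
    "\<And>g'. g' \<in> reduced_GB \<tau> I \<Longrightarrow> pp_dvd (lterm \<tau> g') u \<Longrightarrow> g' = g"
proof -
  interpret \<tau>: finite_term_ordering \<tau>
    by unfold_locales (rule assms(2))
  have G: "is_reduced_GB \<tau> I (reduced_GB \<tau> I)"
    by (rule \<tau>.is_reduced_GB_reduced_GB[OF assms(3)])
  then have "g \<in> I" "Poly_Mapping.lookup g (lterm \<tau> g) = 1"
    using assms(5) unfolding is_reduced_GB_def is_GB_def lcoeff_def by blast+
  then obtain f where f: "f \<in> (red_ideal \<sigma> I :: ('v, 'p mod_ring) mpoly set)" "f \<noteq> 0"
      "Poly_Mapping.keys f \<subseteq> Poly_Mapping.keys g"
    using exists_pi_mod_nonzero_keys_subset[OF assms(3)]
    unfolding red_ideal_eq_pi_mod_image[OF assms(1,3,4)] by blast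
  then have "lterm \<tau> f \<in> Poly_Mapping.keys g"
    using \<tau>.lterm_in_keys by blast
  moreover have "lterm \<tau> f \<in> lterms \<tau> (red_ideal \<sigma> I :: ('v, 'p mod_ring) mpoly set)"
    using f(1,2) by (simp add: lterms_def)
  moreover have "g' = g" if "g' \<in> reduced_GB \<tau> I" "pp_dvd (lterm \<tau> g') (lterm \<tau> f)" for g'
    using G that assms(5) \<open>lterm \<tau> f \<in> Poly_Mapping.keys g\<close> unfolding is_reduced_GB_def by blast
  ultimately show ?thesis
    using that \<tau>.le_lterm by blast
qed

lemma not_tuple_prec_O_tuple_red_ideal:
  fixes I :: "('v::finite, rat) mpoly set"
  assumes "term_order \<sigma>" "term_order \<tau>" "is_ideal I" "good \<sigma> I CARD('p::prime_card)"
  shows "\<not> tuple_prec \<tau> (O_tuple \<tau> I) (O_tuple \<tau> (red_ideal \<sigma> I :: ('v, 'p mod_ring) mpoly set))"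
proof -
  interpret \<tau>: finite_term_ordering \<tau>
    by unfold_locales (rule assms(2))
  let ?J = "red_ideal \<sigma> I :: ('v, 'p mod_ring) mpoly set"
  have J: "is_ideal ?J"
    unfolding red_ideal_def by (rule is_ideal_ideal_gen)
  have T: "set (O_tuple \<tau> I) = lterm \<tau> ` reduced_GB \<tau> I"
    using \<tau>.O_tuple_eq[OF assms(3)]
      lterm_image_minimal_GB[OF \<tau>.reduced_GB_is_minimal[OF \<tau>.is_reduced_GB_reduced_GB[OF assms(3)]]]
    by (simp add: \<tau>.finite_min_lterms)
  have S: "set (O_tuple \<tau> ?J) = min_lterms \<tau> ?J"
    using \<tau>.O_tuple_eq[OF J] by (simp add: \<tau>.finite_min_lterms)
  show ?thesis
  proof (rule \<tau>.not_tuple_prec_if_dominated)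
    show "sorted_wrt (strict_of \<tau>) (O_tuple \<tau> I)" "sorted_wrt (strict_of \<tau>) (O_tuple \<tau> ?J)"
      using \<tau>.O_tuple_eq[OF assms(3)] \<tau>.O_tuple_eq[OF J] by simp_all
    fix t assume "t \<in> set (O_tuple \<tau> I)"
    then obtain g where g: "g \<in> reduced_GB \<tau> I" "t = lterm \<tau> g"
      using T by blast
    obtain u where u: "\<tau> u (lterm \<tau> g)" "u \<in> lterms \<tau> ?J"
        "\<And>g'. g' \<in> reduced_GB \<tau> I \<Longrightarrow> pp_dvd (lterm \<tau> g') u \<Longrightarrow> g' = g"
      using red_ideal_lterm_below_reduced_GB[OF assms g(1)] by blast
    obtain s where "s \<in> min_lterms \<tau> ?J" "pp_dvd s u"
      using u(2) by (rule \<tau>.min_lterms_dvd)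
    moreover have "t' = t" if "t' \<in> set (O_tuple \<tau> I)" "pp_dvd t' u" for t'
      using that u(3) g(2) unfolding T by blast
    ultimately show "\<exists>u. \<tau> u t \<and> (\<exists>s\<in>set (O_tuple \<tau> ?J). pp_dvd s u) \<and>
        (\<forall>t'\<in>set (O_tuple \<tau> I). pp_dvd t' u \<longrightarrow> t' = t)"
      using u(1) g(2) S       by blast
  qed
qed

theorem corollary4p14:
  fixes \<sigma> \<tau> :: "'v::finite pp \<Rightarrow> 'v pp \<Rightarrow> bool"
    and I :: "('v, rat) mpoly set"
  assumes "term_order \<sigma>" and "term_order \<tau>"
    and "is_ideal I" and "I \<noteq> {0}"
    and "good \<sigma> I CARD('p::prime_card)" and "good \<sigma> I CARD('q::prime_card)"
    and "tuple_prec \<tau>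
           (O_tuple \<tau> (red_ideal \<sigma> I :: ('v, 'q mod_ring) mpoly set))
           (O_tuple \<tau> (red_ideal \<sigma> I :: ('v, 'p mod_ring) mpoly set))"
  shows "\<not> good \<tau> I CARD('q)"
proof
  assume "good \<tau> I CARD('q)"
  then have "O_tuple \<tau> (red_ideal \<sigma> I :: ('v, 'q mod_ring) mpoly set) = O_tuple \<tau> I"
    using O_tuple_red_ideal_eq[OF assms(1-3,6)] by blast
  moreover have "\<not> tuple_prec \<tau> (O_tuple \<tau> I) (O_tuple \<tau> (red_ideal \<sigma> I :: ('v, 'p mod_ring) mpoly set))"
    by (rule not_tuple_prec_O_tuple_red_ideal[OF assms(1-3,5)])
  ultimately show False
    using assms(7) by simp
qed

end
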